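(* Let $\Pi$ be a $2$-dimensional toral sub-manifold confined to a rational plane, parametrised as $\Pi=\{u\xi+v\eta:(u,v)\in[0,A]\times[0,B]\}$ with $\xi,\eta$ as specified in the context. Then $$\mathcal{G}=\sum_{\substack{\lambda,\lambda'\in\Lambda_m\\ \lambda\neq\lambda'}}\left|\int_0^A\int_0^B e^{2\pi i\langle\lambda-\lambda',u\xi+v\eta\rangle}du\,dv\right|^2\ll_\Pi N\cdot\kappa(\sqrt m).$$
   Context: For a positive integer $m$ let $\Lambda_m=\{\lambda\in\mathbb{Z}^3:\|\lambda\|^2=m\}$ and $N=|\Lambda_m|$; $m$ ranges over integers with $m\not\equiv 0,4,7\pmod 8$ and bounds refer to $m\to\infty$. Let $\vec n=(n_1,n_2,n_3)$ be the unit normal to the plane containing $\Pi\subset\mathbb{R}^3/\mathbb{Z}^3$, with coordinates labelled so that $n_1\ne0$; the plane is rational if $n_2/n_1,n_3/n_1\in\mathbb{Q}$. Here $\xi=\frac{(n_2,-n_1,0)}{\sqrt{n_1^2+n_2^2}}$, $\eta=\frac{(n_1n_3,n_2n_3,-n_1^2-n_2^2)}{\sqrt{n_1^2+n_2^2}}$, and $A=\max\{u:u\xi+v\eta\in\Pi\}$, $B=\max\{v:u\xi+v\eta\in\Pi\}$. For $R>0$, $\kappa(R)$ is the maximal number of points of $\mathbb{Z}^3$ in the intersection of the sphere of radius $R$ centred at the origin with any plane. *)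

theory Defs
  imports "HOL-Analysis.Analysis"
begin

type_synonym ipt = "int \<times> int \<times> int"
type_synonym rpt = "real \<times> real \<times> real"

definition rdot :: "rpt \<Rightarrow> rpt \<Rightarrow> real" where
  "rdot x y = fst x * fst y + fst (snd x) * fst (snd y) + snd (snd x) * snd (snd y)"

definition ivec :: "ipt \<Rightarrow> rpt" where
  "ivec l = (real_of_int (fst l), real_of_int (fst (snd l)), real_of_int (snd (snd l)))"

definition Lambda :: "nat \<Rightarrow> ipt set" where
  "Lambda m = {(x, y, z). x^2 + y^2 + z^2 = int m}"

definition NN :: "nat \<Rightarrow> nat" where
  "NN m = card (Lambda m)"

definition kappa :: "real \<Rightarrow> nat" where
  "kappa R = Sup {card {l :: ipt. rdot (ivec l) (ivec l) = R^2 \<and> rdot a (ivec l) = c}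
                  | a c. a \<noteq> (0, 0, 0)}"

definition xi :: "real \<Rightarrow> real \<Rightarrow> real \<Rightarrow> rpt" where
  "xi n1 n2 n3 = (n2 / sqrt (n1^2 + n2^2), - n1 / sqrt (n1^2 + n2^2), 0)"

definition eta :: "real \<Rightarrow> real \<Rightarrow> real \<Rightarrow> rpt" where
  "eta n1 n2 n3 = (n1 * n3 / sqrt (n1^2 + n2^2), n2 * n3 / sqrt (n1^2 + n2^2),
                   - (n1^2 + n2^2) / sqrt (n1^2 + n2^2))"

definition piPt :: "real \<Rightarrow> real \<Rightarrow> real \<Rightarrow> real \<Rightarrow> real \<Rightarrow> rpt" where
  "piPt n1 n2 n3 u v =
     (let a = xi n1 n2 n3; b = eta n1 n2 n3 in
      (u * fst a + v * fst b, u * fst (snd a) + v * fst (snd b), u * snd (snd a) + v * snd (snd b)))"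

definition Iint :: "real \<Rightarrow> real \<Rightarrow> real \<Rightarrow> real \<Rightarrow> real \<Rightarrow> ipt \<Rightarrow> complex" where
  "Iint n1 n2 n3 A B d =
     integral {0..A} (\<lambda>u. integral {0..B}
        (\<lambda>v. cis (2 * pi * rdot (ivec d) (piPt n1 n2 n3 u v))))"

definition GG :: "real \<Rightarrow> real \<Rightarrow> real \<Rightarrow> real \<Rightarrow> real \<Rightarrow> nat \<Rightarrow> real" where
  "GG n1 n2 n3 A B m =
     (\<Sum>p \<in> {(l, l'). l \<in> Lambda m \<and> l' \<in> Lambda m \<and> l \<noteq> l'}.
        (cmod (Iint n1 n2 n3 A B (fst p - snd p)))^2)"

end

theory Submission
  imports Defs
begin

text \<open>The integral factorises into one-dimensional integrals along \<open>\<xi>\<close> and \<open>\<eta>\<close>. The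
  \<open>\<eta>\<close>-factor is bounded trivially by \<open>B\<close>. Rationality of the plane makes
  \<open>\<langle>d, \<xi>\<rangle> = \<delta> k\<close> with \<open>\<delta> \<noteq> 0\<close> and \<open>k = p d\<^sub>1 - q d\<^sub>2\<close> an integer linear form, so the
  \<open>\<xi>\<close>-factor has square at most \<open>A\<^sup>2\<close> for \<open>k = 0\<close> and \<open>1/(\<pi>\<delta>k)\<^sup>2\<close> otherwise.
  For fixed \<open>\<lambda>\<close>, the \<open>\<lambda>'\<close> with a prescribed value of \<open>k(\<lambda>')\<close> lie on one plane, so there
  are at most \<open>\<kappa>(\<surd>m)\<close> of them; as \<open>\<Sum> 1/k\<^sup>2\<close> converges, each \<open>\<lambda>\<close> contributes
  \<open>O(\<kappa>(\<surd>m))\<close>.\<close>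

lemma sum_inverse_squares_pos_le:
  fixes J :: "int set"
  assumes "finite J" and "J \<subseteq> {0<..}"
  shows "(\<Sum>j\<in>J. 1 / real_of_int j ^ 2) \<le> pi\<^sup>2 / 6"
proof -
  have "inj_on (\<lambda>j. nat (j - 1)) J"
    using assms(2) by (intro inj_onI) (auto simp: nat_eq_iff2 subset_iff)
  moreover have "real ((nat (j - 1) + 1)\<^sup>2) = real_of_int j ^ 2" if "j \<in> J" for j
    using that assms(2) by (auto simp: subset_iff)
  ultimately have "(\<Sum>j\<in>J. 1 / real_of_int j ^ 2) = (\<Sum>n\<in>(\<lambda>j. nat (j - 1)) ` J. 1 / real ((n + 1)\<^sup>2))"
    by (simp add: sum.reindex)
  also have "\<dots> \<le> (\<Sum>n. 1 / real ((n + 1)\<^sup>2))"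
    using inverse_squares_sums assms(1) by (intro sum_le_suminf) (auto simp: sums_iff)
  also have "\<dots> = pi\<^sup>2 / 6"
    using inverse_squares_sums by (simp add: sums_iff)
  finally show ?thesis .
qed

lemma sum_inverse_squares_le:
  fixes J :: "int set"
  assumes "finite J" and "0 \<notin> J"
  shows "(\<Sum>j\<in>J. 1 / real_of_int j ^ 2) \<le> pi\<^sup>2 / 3"
proof -
  define P where "P = {j \<in> J. j > 0}"
  define Q where "Q = uminus ` {j \<in> J. j < 0}"
  have J: "J = P \<union> uminus ` Q" and disj: "P \<inter> uminus ` Q = {}"
    using assms(2) unfolding P_def Q_def by (auto simp: image_image) (metis less_linear)
  have "(\<Sum>j\<in>J. 1 / real_of_int j ^ 2) = (\<Sum>j\<in>P. 1 / real_of_int j ^ 2) + (\<Sum>j\<in>Q. 1 / real_of_int j ^ 2)"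
    unfolding J using assms(1) J by (subst sum.union_disjoint) (auto simp: disj sum.reindex)
  also have "\<dots> \<le> pi\<^sup>2 / 6 + pi\<^sup>2 / 6"
    using assms(1) unfolding P_def Q_def by (intro add_mono sum_inverse_squares_pos_le) auto
  finally show ?thesis by simp
qed

definition cis_integral :: "real \<Rightarrow> real \<Rightarrow> complex" where
  "cis_integral a A = integral {0..A} (\<lambda>u. cis (2 * pi * u * a))"

lemma has_integral_cis_linear:
  fixes a A :: real
  assumes "a \<noteq> 0" and "A \<ge> 0"
  shows "((\<lambda>u. cis (2 * pi * u * a)) has_integral (cis (2 * pi * A * a) - 1) / (2 * pi * \<i> * a)) {0..A}"
proof -
  have "((\<lambda>u. cis (2 * pi * u * a) / (2 * pi * \<i> * a)) has_vector_derivative cis (2 * pi * x * a))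
          (at x within {0..A})" for x
    unfolding has_vector_derivative_def
    by (rule has_derivative_eq_rhs, (rule derivative_intros)+)
       (use assms(1) in \<open>auto simp: fun_eq_iff field_simps scaleR_conv_of_real\<close>)
  from fundamental_theorem_of_calculus[OF assms(2) this]
  show ?thesis by (simp add: diff_divide_distrib)
qed

lemma norm_cis_integral_le:
  assumes "A \<ge> 0"
  shows "norm (cis_integral a A) \<le> A"
proof -
  have "continuous_on {0..A} (\<lambda>u. cis (2 * pi * u * a))"
    by (intro continuous_intros)
  then have "norm (cis_integral a A) \<le> integral {0..A} (\<lambda>u. 1 :: real)"
    unfolding cis_integral_def
    by (intro integral_norm_bound_integral integrable_continuous_interval) auto
  then show ?thesis using assms by simp
qed

lemma norm_cis_integral_le_inverse:
  assumes "A \<ge> 0" and "a \<noteq> 0"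
  shows "norm (cis_integral a A) \<le> 1 / (pi * \<bar>a\<bar>)"
proof -
  have "cis_integral a A = (cis (2 * pi * A * a) - 1) / (2 * pi * \<i> * a)"
    unfolding cis_integral_def using has_integral_cis_linear[OF assms(2,1)] by (rule integral_unique)
  then have "norm (cis_integral a A) = norm (cis (2 * pi * A * a) - 1) / (2 * pi * \<bar>a\<bar>)"
    by (simp add: norm_divide norm_mult)
  also have "\<dots> \<le> 2 / (2 * pi * \<bar>a\<bar>)"
    using norm_triangle_ineq4[of "cis (2 * pi * A * a)" 1] by (intro divide_right_mono) auto
  finally show ?thesis by simp
qed

definition freq_weight :: "real \<Rightarrow> real \<Rightarrow> int \<Rightarrow> real" where
  "freq_weight L c j = (if j = 0 then L\<^sup>2 else c / real_of_int j ^ 2)"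

lemma freq_weight_nonneg: "c \<ge> 0 \<Longrightarrow> freq_weight L c j \<ge> 0"
  by (simp add: freq_weight_def)

lemma norm_cis_integral_sq_le_freq_weight:
  assumes "A \<ge> 0" and "\<delta> \<noteq> 0"
  shows "(norm (cis_integral (\<delta> * of_int k) A))\<^sup>2 \<le> freq_weight A (1 / (pi * \<delta>)\<^sup>2) k"
proof (cases "k = 0")
  case True
  then show ?thesis
    using norm_cis_integral_le[OF assms(1)] by (simp add: freq_weight_def power_mono)
next
  case False
  have "(norm (cis_integral (\<delta> * of_int k) A))\<^sup>2 \<le> (1 / (pi * \<bar>\<delta> * of_int k\<bar>))\<^sup>2"
    using norm_cis_integral_le_inverse[OF assms(1)] assms(2) False by (intro power_mono) auto
  then show ?thesis
    using False by (simp add: freq_weight_def abs_mult field_simps)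
qed

lemma sum_freq_weight_le:
  assumes "finite J" and "c \<ge> 0"
  shows "sum (freq_weight L c) J \<le> L\<^sup>2 + c * pi\<^sup>2 / 3"
proof -
  have "sum (freq_weight L c) J \<le> sum (freq_weight L c) (insert 0 J)"
    using assms by (intro sum_mono2 freq_weight_nonneg) auto
  also have "\<dots> = L\<^sup>2 + c * (\<Sum>j\<in>J - {0}. 1 / real_of_int j ^ 2)"
    using assms(1) by (simp add: sum.insert_remove freq_weight_def sum_distrib_left)
  also have "\<dots> \<le> L\<^sup>2 + c * (pi\<^sup>2 / 3)"
    using assms by (intro add_left_mono mult_left_mono sum_inverse_squares_le) auto
  finally show ?thesis by simp
qed

lemma rdot_piPt:
  "rdot x (piPt n1 n2 n3 u v) = u * rdot x (xi n1 n2 n3) + v * rdot x (eta n1 n2 n3)"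
  unfolding piPt_def Let_def rdot_def by (simp add: algebra_simps)

lemma Iint_eq_cis_integral_mult:
  "Iint n1 n2 n3 A B d =
     cis_integral (rdot (ivec d) (xi n1 n2 n3)) A * cis_integral (rdot (ivec d) (eta n1 n2 n3)) B"
proof -
  define a where "a = rdot (ivec d) (xi n1 n2 n3)"
  define b where "b = rdot (ivec d) (eta n1 n2 n3)"
  have "cis (2 * pi * rdot (ivec d) (piPt n1 n2 n3 u v)) = cis (2 * pi * u * a) * cis (2 * pi * v * b)"
    for u v unfolding rdot_piPt cis_mult a_def b_def by (simp add: algebra_simps)
  then show ?thesis
    unfolding Iint_def cis_integral_def a_def[symmetric] b_def[symmetric] by simp
qed

lemma norm_Iint_sq_le_freq_weight:
  assumes "A \<ge> 0" and "B \<ge> 0" and "\<delta> \<noteq> 0"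
    and "rdot (ivec d) (xi n1 n2 n3) = \<delta> * of_int k"
  shows "(norm (Iint n1 n2 n3 A B d))\<^sup>2 \<le> B\<^sup>2 * freq_weight A (1 / (pi * \<delta>)\<^sup>2) k"
proof -
  have "(norm (Iint n1 n2 n3 A B d))\<^sup>2
      = (norm (cis_integral (rdot (ivec d) (eta n1 n2 n3)) B))\<^sup>2 * (norm (cis_integral (\<delta> * of_int k) A))\<^sup>2"
    by (simp add: Iint_eq_cis_integral_mult assms(4) norm_mult power_mult_distrib)
  also have "\<dots> \<le> B\<^sup>2 * freq_weight A (1 / (pi * \<delta>)\<^sup>2) k"
    using assms(1-3)
    by (intro mult_mono power_mono norm_cis_integral_le norm_cis_integral_sq_le_freq_weight) auto
  finally show ?thesis .
qed

lemma rdot_xi_rational: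
  assumes "n1 \<noteq> 0" and "n2 / n1 \<in> \<rat>"
  obtains \<delta> :: real and p q :: int
  where "\<delta> \<noteq> 0" and "q \<noteq> 0"
    and "\<And>d. rdot (ivec d) (xi n1 n2 n3) = \<delta> * of_int (p * fst d - q * fst (snd d))"
proof -
  obtain p q :: int where q: "q > 0" and pq: "n2 / n1 = of_int p / of_int q"
    using Rats_cases'[OF assms(2)] by metis
  have n2: "n2 = n1 * of_int p / of_int q"
    using pq assms(1) q by (simp add: field_simps)
  define s where "s = sqrt (n1\<^sup>2 + n2\<^sup>2)"
  have s: "s > 0"
    unfolding s_def using assms(1) by (simp add: add_pos_nonneg)
  have "rdot (ivec d) (xi n1 n2 n3) = n1 / (of_int q * s) * of_int (p * fst d - q * fst (snd d))" for d
    unfolding rdot_def ivec_def xi_def s_def[symmetric] using q s by (simp add: n2 field_simps)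
  then show ?thesis
    using that[of "n1 / (of_int q * s)" q p] assms(1) q s by simp
qed

lemma abs_le_power2_int: "\<bar>x :: int\<bar> \<le> x\<^sup>2"
  by (cases "x = 0") (auto simp: power2_eq_square abs_mult[symmetric] intro: self_le_power[of "\<bar>x\<bar>" 2, simplified])

lemma finite_Lambda: "finite (Lambda m)"
proof (rule finite_subset)
  show "Lambda m \<subseteq> {-int m..int m} \<times> {-int m..int m} \<times> {-int m..int m}"
  proof safe
    fix x y z assume "(x, y, z) \<in> Lambda m"
    then have "x\<^sup>2 + y\<^sup>2 + z\<^sup>2 = int m"
      by (simp add: Lambda_def)
    with abs_le_power2_int[of x] abs_le_power2_int[of y] abs_le_power2_int[of z]
    show "x \<in> {-int m..int m}" "y \<in> {-int m..int m}" "z \<in> {-int m..int m}"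
      by (auto simp: abs_le_iff)
  qed
qed simp

lemma rdot_ivec_self_eq_iff_Lambda: "rdot (ivec l) (ivec l) = real m \<longleftrightarrow> l \<in> Lambda m"
proof -
  obtain x y z where l: "l = (x, y, z)"
    by (cases l) auto
  have "rdot (ivec l) (ivec l) = real m \<longleftrightarrow> of_int (x\<^sup>2 + y\<^sup>2 + z\<^sup>2) = (of_int (int m) :: real)"
    unfolding l by (simp add: rdot_def ivec_def power2_eq_square)
  then show ?thesis
    unfolding l Lambda_def by (simp only: of_int_eq_iff) simp
qed

lemma card_Lambda_plane_le_kappa:
  assumes "a \<noteq> (0, 0, 0)"
  shows "card {l \<in> Lambda m. rdot a (ivec l) = c} \<le> kappa (sqrt (real m))"
proof -
  define P where "P a c = {l :: ipt. rdot (ivec l) (ivec l) = (sqrt (real m))\<^sup>2 \<and> rdot a (ivec l) = c}"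
    for a c
  have P: "P a c = {l \<in> Lambda m. rdot a (ivec l) = c}" for a c
    unfolding P_def using rdot_ivec_self_eq_iff_Lambda by auto
  have bdd: "bdd_above {card (P a c) | a c. a \<noteq> (0, 0, 0)}"
    by (rule bdd_aboveI[of _ "card (Lambda m)"]) (auto simp: P intro!: card_mono finite_Lambda)
  have "card (P a c) \<le> Sup {card (P a c) | a c. a \<noteq> (0, 0, 0)}"
    by (rule cSup_upper[OF _ bdd]) (use assms in blast)
  then show ?thesis
    unfolding kappa_def P_def[symmetric] P .
qed

lemma sum_Lambda_fibres_le:
  fixes f :: "ipt \<Rightarrow> int" and w :: "int \<Rightarrow> real"
  assumes "a \<noteq> (0, 0, 0)" and "\<And>l. rdot a (ivec l) = of_int (f l)"
    and "\<And>j. w j \<ge> 0" and "\<And>J. finite J \<Longrightarrow> sum w J \<le> H"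
  shows "(\<Sum>l\<in>Lambda m. w (f l)) \<le> real (kappa (sqrt (real m))) * H"
proof -
  have fibre: "card {l \<in> Lambda m. f l = j} \<le> kappa (sqrt (real m))" for j
    using card_Lambda_plane_le_kappa[OF assms(1), of m "of_int j"] by (simp add: assms(2))
  have "(\<Sum>l\<in>Lambda m. w (f l)) = (\<Sum>j\<in>f ` Lambda m. real (card {l \<in> Lambda m. f l = j}) * w j)"
    by (subst sum.image_gen[OF finite_Lambda, where g = f]) simp
  also have "\<dots> \<le> (\<Sum>j\<in>f ` Lambda m. real (kappa (sqrt (real m))) * w j)"
    using fibre assms(3) by (intro sum_mono mult_right_mono) auto
  also have "\<dots> \<le> real (kappa (sqrt (real m))) * H"
    by (simp add: sum_distrib_left[symmetric] assms(4) finite_Lambda mult_left_mono)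
  finally show ?thesis .
qed

lemma sum_Lambda_differences_le:
  fixes f :: "ipt \<Rightarrow> int" and w :: "int \<Rightarrow> real" and g :: "ipt \<Rightarrow> real"
  assumes "a \<noteq> (0, 0, 0)" and "\<And>l. rdot a (ivec l) = of_int (f l)"
    and "\<And>j. w j \<ge> 0" and "\<And>J. finite J \<Longrightarrow> sum w J \<le> H"
    and "\<And>d. g d \<le> w (f d)"
  shows "(\<Sum>l\<in>Lambda m. \<Sum>l'\<in>Lambda m. g (l - l')) \<le> real (NN m) * real (kappa (sqrt (real m))) * H"
proof -
  have f_diff: "f (l - l') = f l - f l'" for l l'
    using assms(2)[of "l - l'"] assms(2)[of l] assms(2)[of l']
    by (cases l, cases l') (simp add: rdot_def ivec_def algebra_simps)
  have "(\<Sum>l'\<in>Lambda m. g (l - l')) \<le> real (kappa (sqrt (real m))) * H" for l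
  proof -
    have "(\<Sum>l'\<in>Lambda m. g (l - l')) \<le> (\<Sum>l'\<in>Lambda m. w (f l - f l'))"
      by (intro sum_mono) (metis assms(5) f_diff)
    also have "\<dots> \<le> real (kappa (sqrt (real m))) * H"
    proof (rule sum_Lambda_fibres_le[OF assms(1,2)])
      fix J :: "int set" assume "finite J"
      have "(\<Sum>j\<in>J. w (f l - j)) = sum w ((\<lambda>j. f l - j) ` J)"
        by (simp add: sum.reindex inj_on_def)
      also have "\<dots> \<le> H"
        using \<open>finite J\<close> by (intro assms(4)) simp
      finally show "(\<Sum>j\<in>J. w (f l - j)) \<le> H" .
    qed (use assms(3) in simp)
    finally show ?thesis .
  qed
  then have "(\<Sum>l\<in>Lambda m. \<Sum>l'\<in>Lambda m. g (l - l')) \<le> (\<Sum>l\<in>Lambda m. real (kappa (sqrt (real m))) * H)"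
    by (intro sum_mono)
  then show ?thesis
    by (simp add: NN_def)
qed

lemma GG_le_sum_Lambda_differences:
  "GG n1 n2 n3 A B m \<le> (\<Sum>l\<in>Lambda m. \<Sum>l'\<in>Lambda m. (norm (Iint n1 n2 n3 A B (l - l')))\<^sup>2)"
proof -
  have "GG n1 n2 n3 A B m \<le> (\<Sum>p\<in>Lambda m \<times> Lambda m. (norm (Iint n1 n2 n3 A B (fst p - snd p)))\<^sup>2)"
    unfolding GG_def by (intro sum_mono2 finite_cartesian_product finite_Lambda) auto
  then show ?thesis
    by (simp add: sum.cartesian_product case_prod_unfold)
qed

theorem lemma4p3:
  fixes n1 n2 n3 A B :: real
  assumes "n1^2 + n2^2 + n3^2 = 1"
    and "n1 \<noteq> 0"
    and "n2 / n1 \<in> \<rat>" and "n3 / n1 \<in> \<rat>"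
    and "A > 0" and "B > 0"
  shows "\<exists>C. \<forall>\<^sub>F m in at_top. m mod 8 \<notin> {0, 4, 7} \<longrightarrow>
           GG n1 n2 n3 A B m \<le> C * real (NN m) * real (kappa (sqrt (real m)))"
proof -
  obtain \<delta> :: real and p q :: int where "\<delta> \<noteq> 0" and "q \<noteq> 0"
    and xi: "\<And>d. rdot (ivec d) (xi n1 n2 n3) = \<delta> * of_int (p * fst d - q * fst (snd d))"
    using rdot_xi_rational[of n1 n2 n3] assms(2,3) by metis
  define f where "f d = p * fst d - q * fst (snd d)" for d :: ipt
  define c where "c = 1 / (pi * \<delta>)\<^sup>2"
  define w where "w j = B\<^sup>2 * freq_weight A c j" for j
  define C where "C = B\<^sup>2 * (A\<^sup>2 + c * pi\<^sup>2 / 3)"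
  have f: "rdot (of_int p, - of_int q, 0) (ivec d) = of_int (f d)" for d
    by (simp add: rdot_def ivec_def f_def)
  have w: "w j \<ge> 0" for j
    unfolding w_def c_def by (simp add: freq_weight_nonneg)
  have sum_w: "sum w J \<le> C" if "finite J" for J
    unfolding w_def C_def sum_distrib_left[symmetric] c_def using that
    by (intro mult_left_mono sum_freq_weight_le) auto
  have Iint: "(norm (Iint n1 n2 n3 A B d))\<^sup>2 \<le> w (f d)" for d
    unfolding w_def c_def using assms(5,6) \<open>\<delta> \<noteq> 0\<close> xi[of d] f_def
    by (intro norm_Iint_sq_le_freq_weight) auto
  have "GG n1 n2 n3 A B m \<le> real (NN m) * real (kappa (sqrt (real m))) * C" for m
    using \<open>q \<noteq> 0\<close>
    by (intro order.trans[OF GG_le_sum_Lambda_differences sum_Lambda_differences_le[OF _ f w sum_w Iint]]) simp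
  then show ?thesis
    by (intro exI[of _ C] always_eventually allI impI) (simp add: mult_ac)
qed

end
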